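(* Let $P=(P_1,\dots,P_m):\mathbb{R}^n\to\mathbb{R}^m$ be a polynomial map with $P(0)=0$ and let $r\ge1$. The following are equivalent: (a) there exist $C,\varepsilon,\sigma>0$ such that $\mathscr{D}(\operatorname{grad}P_1(x),\dots,\operatorname{grad}P_m(x))\ge C|x|^{r-1}$ for all $x\in\mathscr{H}_{r}(P;\sigma)$ with $|x|<\varepsilon$; (b) there exist $q>0$, $\varepsilon>0$ such that $|P(x)|\cdot|y|+|(dP)^{*}(x)y|\cdot|x|\ge q|x|^{r}|y|$ for all $|x|<\varepsilon$ and all $y\in\mathbb{R}^m$.
   Context: $|\cdot|$ is the Euclidean norm; $(dP)^{*}(x)$ is the transpose of the Jacobian of $P$ at $x$. The horn-neighbourhood is $\mathscr{H}_{s}(F;\sigma)=\{x\in\mathbb{R}^{n}: |F(x)|<\sigma|x|^{s}\}$. For $v_1,\dots,v_m\in\mathbb{R}^n$, $\mathscr{D}(v_{1},\dots,v_{m})=\min_{i}\operatorname{dist}(v_{i},V_{i})$, where $V_{i}$ is the linear span of the $v_{j}$, $j\neq i$. *)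

theory Defs
  imports "HOL-Analysis.Analysis"
begin

definition horn :: "real \<Rightarrow> ('a::real_normed_vector \<Rightarrow> 'b::real_normed_vector) \<Rightarrow> real \<Rightarrow> 'a set" where
  "horn s F \<sigma> = {x. norm (F x) < \<sigma> * norm x powr s}"

definition Dmin :: "('m::finite \<Rightarrow> 'a::euclidean_space) \<Rightarrow> real" where
  "Dmin v = Min ((\<lambda>i. infdist (v i) (span (v ` (UNIV - {i})))) ` UNIV)"

definition grad_comp :: "(real^'n \<Rightarrow> real^'m) \<Rightarrow> 'm \<Rightarrow> real^'n \<Rightarrow> real^'n" where
  "grad_comp P i x = row i (jacobian P (at x))"

end

theory Submission
  imports Defs
begin

(* The theorem is a pointwise statement of linear algebra.  Write J = dP(x), so that
   (dP)^*(x) y = sum_i y_i grad P_i(x) is a linear combination of the rows of J.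
   The quantity D(v_1,...,v_m) is comparable to the smallest value of
   |sum_i y_i v_i| on the unit sphere |y| = 1:
     - each |y_k| dist(v_k, span of the others) <= |sum_i y_i v_i|, hence
       D(v) |y| <= m |sum_i y_i v_i|   (lemma Dmin_mult_norm_le);
     - conversely a bound c |y| <= |sum_i y_i v_i| for all y gives c <= D(v)
       (lemma lower_bound_le_Dmin).
   Off the horn neighbourhood the term |P(x)| |y| already dominates q |x|^r |y|,
   inside it the term |J^T y| |x| does; this gives (a) => (b) with
   q = min(sigma, C/m).  For (b) => (a) take sigma = q/2: inside the horn the first
   term is at most (q/2)|x|^r |y|, so |J^T y| >= (q/2)|x|^(r-1) |y|, and the converse
   comparison yields D >= (q/2)|x|^(r-1).  Neither direction uses that P is polynomial,
   that P(0) = 0 or that r >= 1; the two directions are proved for an arbitrary map F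
   and an arbitrary matrix field J, and the theorem is their instance J = dP. *)

definition lincomb :: "('m::finite \<Rightarrow> 'a::real_vector) \<Rightarrow> real^'m \<Rightarrow> 'a" where
  "lincomb v y = (\<Sum>i\<in>UNIV. y$i *\<^sub>R v i)"

lemma linear_lincomb: "linear (lincomb v)"
  by (rule linearI) (simp_all add: lincomb_def scaleR_add_left sum.distrib scaleR_sum_right)

lemma lincomb_axis: "lincomb v (axis j 1) = v j"
  by (simp add: lincomb_def axis_def if_distrib[of "\<lambda>a. a *\<^sub>R b" for b] cong: if_cong)

lemma transpose_mult_vec_eq_lincomb: "transpose A *v y = lincomb (\<lambda>i. row i A) y"
  by (simp add: vec_eq_iff lincomb_def matrix_vector_mult_def transpose_def row_def
      sum_component mult.commute)

text \<open>Every vector of the span of the v_j, j \<noteq> k, is a combination with vanishing k-th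
  coefficient: such combinations form a subspace (the linear image of a hyperplane)
  containing every v_j with j \<noteq> k.\<close>
lemma span_others_subset_lincomb:
  fixes v :: "'m::finite \<Rightarrow> 'a::real_vector"
  shows "span (v ` (UNIV - {k})) \<subseteq> lincomb v ` {y. y$k = 0}"
proof (rule span_minimal)
  have "{y::real^'m. y$k = 0} = {y. axis k 1 \<bullet> y = 0}"
    by (simp add: inner_axis')
  then show "subspace (lincomb v ` {y. y$k = 0})"
    using linear_subspace_image[OF linear_lincomb subspace_hyperplane] by metis
  show "v ` (UNIV - {k}) \<subseteq> lincomb v ` {y. y$k = 0}"
  proof (rule image_subsetI)
    fix j assume "j \<in> UNIV - {k}"
    then show "v j \<in> lincomb v ` {y. y$k = 0}"
      by (intro image_eqI[of _ _ "axis j 1"]) (simp add: lincomb_axis, simp add: axis_def)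
  qed
qed

lemma Dmin_nonneg: "0 \<le> Dmin v"
  unfolding Dmin_def by (subst Min_ge_iff) (auto simp: infdist_nonneg)

lemma Dmin_le: "Dmin v \<le> infdist (v k) (span (v ` (UNIV - {k})))"
  unfolding Dmin_def by (rule Min_le) auto

lemma le_infdist:
  assumes "A \<noteq> {}" and "\<And>a. a \<in> A \<Longrightarrow> c \<le> dist x a"
  shows "c \<le> infdist x A"
  unfolding infdist_notempty[OF assms(1)] using assms by (intro cINF_greatest)

lemma coeff_mult_infdist_le:
  "\<bar>y$k\<bar> * infdist (v k) (span (v ` (UNIV - {k}))) \<le> norm (lincomb v y)"
proof (cases "y$k = 0")
  case False
  define w where "w = - (1 / y$k) *\<^sub>R (\<Sum>i\<in>UNIV - {k}. y$i *\<^sub>R v i)"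
  have w: "w \<in> span (v ` (UNIV - {k}))"
    unfolding w_def by (intro span_mul span_sum span_base) auto
  have "lincomb v y = y$k *\<^sub>R v k + (\<Sum>i\<in>UNIV - {k}. y$i *\<^sub>R v i)"
    by (simp add: lincomb_def sum.remove[of UNIV k])
  also have "\<dots> = y$k *\<^sub>R (v k - w)"
    using False by (simp add: w_def algebra_simps)
  finally have "norm (lincomb v y) = \<bar>y$k\<bar> * dist (v k) w"
    by (simp add: dist_norm)
  with infdist_le[OF w, of "v k"] show ?thesis
    by (simp add: mult_left_mono)
qed simp

lemma Dmin_mult_norm_le:
  fixes v :: "'m::finite \<Rightarrow> 'a::euclidean_space"
  shows "Dmin v * norm y \<le> real CARD('m) * norm (lincomb v y)"
proof -
  have "Dmin v * norm y \<le> (\<Sum>k\<in>UNIV. \<bar>y$k\<bar> * Dmin v)"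
    using mult_left_mono[OF norm_le_l1_cart Dmin_nonneg]
    by (simp add: sum_distrib_left mult.commute)
  also have "\<dots> \<le> (\<Sum>k\<in>(UNIV::'m set). norm (lincomb v y))"
    by (intro sum_mono order_trans[OF mult_left_mono[OF Dmin_le] coeff_mult_infdist_le]) auto
  finally show ?thesis by simp
qed

text \<open>Second comparison: a uniform lower bound c |y| \<le> |sum_i y_i v_i| implies c \<le> D(v).
  For w in the span of the others write v_k - w as a combination z with z_k = 1.\<close>
lemma lower_bound_le_Dmin:
  fixes v :: "'m::finite \<Rightarrow> 'a::euclidean_space"
  assumes bound: "\<And>y. c * norm y \<le> norm (lincomb v y)"
  shows "c \<le> Dmin v"
proof (cases "c \<le> 0")
  case True
  then show ?thesis using Dmin_nonneg order_trans by blast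
next
  case False
  show ?thesis unfolding Dmin_def
  proof (subst Min_ge_iff, simp_all, intro allI le_infdist)
    fix k and w assume "w \<in> span (v ` (UNIV - {k}))"
    then obtain y where y: "y$k = 0" "w = lincomb v y"
      using span_others_subset_lincomb by blast
    define z where "z = axis k 1 - y"
    have "v k - w = lincomb v z"
      by (simp add: z_def y lincomb_axis linear_diff[OF linear_lincomb])
    moreover have "1 \<le> norm z"
      using component_le_norm_cart[of z k] by (simp add: z_def y)
    ultimately have "c \<le> norm (v k - w)"
      using bound[of z] False by (smt (verit) mult_left_mono mult_cancel_left1)
    then show "c \<le> dist (v k) w" by (simp add: dist_norm)
  qed (use span_zero in blast)
qed

lemma Dmin_rows_mult_norm_le:
  "Dmin (\<lambda>i. row i (A::real^'n^'m)) * norm y \<le> real CARD('m) * norm (transpose A *v y)"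
  unfolding transpose_mult_vec_eq_lincomb by (rule Dmin_mult_norm_le)

lemma lower_bound_le_Dmin_rows:
  "(\<And>y. c * norm y \<le> norm (transpose (A::real^'n^'m) *v y)) \<Longrightarrow> c \<le> Dmin (\<lambda>i. row i A)"
  unfolding transpose_mult_vec_eq_lincomb by (rule lower_bound_le_Dmin)

lemma powr_pred_mult:
  fixes t :: real
  assumes "t > 0"
  shows "t powr (r - 1) * t = t powr r"
proof -
  have "t powr r = t powr ((r - 1) + 1)" by simp
  also have "\<dots> = t powr (r - 1) * t powr 1" by (rule powr_add)
  finally show ?thesis using assms by simp
qed

lemma horn_Dmin_bound_imp_adjoint_bound:
  fixes F :: "real^'n \<Rightarrow> real^'m" and J :: "real^'n \<Rightarrow> real^'n^'m"
  assumes "C > 0" and "\<sigma> > 0"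
    and D: "\<And>x. x \<in> horn r F \<sigma> \<Longrightarrow> norm x < \<epsilon> \<Longrightarrow> C * norm x powr (r - 1) \<le> Dmin (\<lambda>i. row i (J x))"
    and "norm x < \<epsilon>"
  shows "min \<sigma> (C / real CARD('m)) * norm x powr r * norm y
           \<le> norm (F x) * norm y + norm (transpose (J x) *v y) * norm x"
    (is "?q * _ * _ \<le> ?P + ?A")
proof (cases "x \<in> horn r F \<sigma>")
  case True
  then have "x \<noteq> 0" by (auto simp: horn_def)
  have "C * norm x powr (r - 1) * norm y \<le> real CARD('m) * norm (transpose (J x) *v y)"
    using mult_right_mono[OF D[OF True \<open>norm x < \<epsilon>\<close>] norm_ge_zero] Dmin_rows_mult_norm_le
    by (rule order_trans)
  then have "C / real CARD('m) * norm x powr (r - 1) * norm y \<le> norm (transpose (J x) *v y)"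
    by (simp add: field_simps)
  from mult_right_mono[OF this norm_ge_zero, of x]
  have "C / real CARD('m) * norm x powr r * norm y \<le> ?A"
    using powr_pred_mult[of "norm x" r] \<open>x \<noteq> 0\<close> by (simp add: algebra_simps)
  moreover have "?q * norm x powr r * norm y \<le> C / real CARD('m) * norm x powr r * norm y"
    by (intro mult_right_mono) auto
  ultimately show ?thesis by (smt (verit) mult_nonneg_nonneg norm_ge_zero)
next
  case False
  then have "\<sigma> * norm x powr r * norm y \<le> ?P"
    by (simp add: horn_def mult_right_mono)
  moreover have "?q * norm x powr r * norm y \<le> \<sigma> * norm x powr r * norm y"
    by (intro mult_right_mono) auto
  ultimately show ?thesis by (smt (verit) mult_nonneg_nonneg norm_ge_zero)
qed

text \<open>(b) \<Longrightarrow> (a) with \<sigma> = q/2.  The horn condition forces x \<noteq> 0 since 0 powr r = 0.\<close>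
lemma adjoint_bound_imp_horn_Dmin_bound:
  fixes F :: "real^'n \<Rightarrow> real^'m" and J :: "real^'n \<Rightarrow> real^'n^'m"
  assumes B: "\<And>y. q * norm x powr r * norm y \<le> norm (F x) * norm y + norm (transpose (J x) *v y) * norm x"
    and horn: "x \<in> horn r F (q/2)"
  shows "q/2 * norm x powr (r - 1) \<le> Dmin (\<lambda>i. row i (J x))"
proof (rule lower_bound_le_Dmin_rows)
  fix y :: "real^'m"
  have small: "norm (F x) < q/2 * norm x powr r"
    using horn by (simp add: horn_def)
  then have "x \<noteq> 0" by auto
  have "norm (F x) * norm y \<le> q/2 * norm x powr r * norm y"
    using small by (intro mult_right_mono) auto
  with B[of y] have "(q/2 * norm x powr (r - 1) * norm y) * norm x \<le> norm (transpose (J x) *v y) * norm x"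
    using powr_pred_mult[of "norm x" r] \<open>x \<noteq> 0\<close> by (simp add: algebra_simps)
  then show "q/2 * norm x powr (r - 1) * norm y \<le> norm (transpose (J x) *v y)"
    using \<open>x \<noteq> 0\<close> by simp
qed

theorem mainTheorem5:
  fixes P :: "real^'n \<Rightarrow> real^'m" and r :: real
  assumes "polynomial_function P" and "P 0 = 0" and "r \<ge> 1"
  shows "(\<exists>C \<epsilon> \<sigma>. C > 0 \<and> \<epsilon> > 0 \<and> \<sigma> > 0 \<and>
            (\<forall>x \<in> horn r P \<sigma>. norm x < \<epsilon> \<longrightarrow>
               Dmin (\<lambda>i. grad_comp P i x) \<ge> C * norm x powr (r - 1)))
     \<longleftrightarrow>
         (\<exists>q \<epsilon>. q > 0 \<and> \<epsilon> > 0 \<and>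
            (\<forall>x y. norm x < \<epsilon> \<longrightarrow>
               norm (P x) * norm y + norm (transpose (jacobian P (at x)) *v y) * norm x
                 \<ge> q * norm x powr r * norm y))"
proof
  assume "\<exists>C \<epsilon> \<sigma>. C > 0 \<and> \<epsilon> > 0 \<and> \<sigma> > 0 \<and>
            (\<forall>x \<in> horn r P \<sigma>. norm x < \<epsilon> \<longrightarrow> Dmin (\<lambda>i. grad_comp P i x) \<ge> C * norm x powr (r - 1))"
  then obtain C \<epsilon> \<sigma> where pos: "C > 0" "\<epsilon> > 0" "\<sigma> > 0"
    and a: "\<forall>x \<in> horn r P \<sigma>. norm x < \<epsilon> \<longrightarrow> Dmin (\<lambda>i. grad_comp P i x) \<ge> C * norm x powr (r - 1)"
    by blast
  have "\<forall>x y. norm x < \<epsilon> \<longrightarrow> norm (P x) * norm y + norm (transpose (jacobian P (at x)) *v y) * norm x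
          \<ge> min \<sigma> (C / real CARD('m)) * norm x powr r * norm y"
    using a by (intro allI impI horn_Dmin_bound_imp_adjoint_bound[OF pos(1,3)]) (auto simp: grad_comp_def)
  with pos show "\<exists>q \<epsilon>. q > 0 \<and> \<epsilon> > 0 \<and> (\<forall>x y. norm x < \<epsilon> \<longrightarrow>
          norm (P x) * norm y + norm (transpose (jacobian P (at x)) *v y) * norm x \<ge> q * norm x powr r * norm y)"
    by (intro exI[of _ "min \<sigma> (C / real CARD('m))"] exI[of _ \<epsilon>]) simp
next
  assume "\<exists>q \<epsilon>. q > 0 \<and> \<epsilon> > 0 \<and> (\<forall>x y. norm x < \<epsilon> \<longrightarrow>
            norm (P x) * norm y + norm (transpose (jacobian P (at x)) *v y) * norm x \<ge> q * norm x powr r * norm y)"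
  then obtain q \<epsilon> where pos: "q > 0" "\<epsilon> > 0" and b: "\<forall>x y. norm x < \<epsilon> \<longrightarrow>
      norm (P x) * norm y + norm (transpose (jacobian P (at x)) *v y) * norm x \<ge> q * norm x powr r * norm y"
    by blast
  have "\<forall>x \<in> horn r P (q/2). norm x < \<epsilon> \<longrightarrow> Dmin (\<lambda>i. grad_comp P i x) \<ge> q/2 * norm x powr (r - 1)"
    unfolding grad_comp_def using b by (intro ballI impI adjoint_bound_imp_horn_Dmin_bound) auto
  with pos show "\<exists>C \<epsilon> \<sigma>. C > 0 \<and> \<epsilon> > 0 \<and> \<sigma> > 0 \<and>
          (\<forall>x \<in> horn r P \<sigma>. norm x < \<epsilon> \<longrightarrow> Dmin (\<lambda>i. grad_comp P i x) \<ge> C * norm x powr (r - 1))"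
    by (intro exI[of _ "q/2"] exI[of _ \<epsilon>] exI[of _ "q/2"]) simp
qed

end
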